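(* Let $\pi$ be a $\mathbb{G}$-optional integer valued random measure on $\mathbb{R}_+\times E$. Then $\pi$ admits an $\mathbb{F}$-optional reduction, i.e. an $\mathbb{F}$-optional integer valued random measure $\pi'$ on $\mathbb{R}_+\times E$ such that $1_{[0,\tau)}\cdot\pi=1_{[0,\tau)}\cdot\pi'$.
   Context: Setting: $(\Omega,\mathcal{A},\mathbb{Q})$ a probability space, $\mathbb{G}=(\mathfrak{G}_t)_{t\ge0}$ a filtration satisfying the usual conditions, $\mathbb{F}=(\mathfrak{F}_t)_{t\ge0}$ a subfiltration of $\mathbb{G}$ satisfying the usual conditions, $\tau$ a strictly positive (possibly infinite) $\mathbb{G}$-stopping time such that for every $t\ge0$ and $B\in\mathfrak{G}_t$ there is $B'\in\mathfrak{F}_t$ with $B\cap\{t<\tau\}=B'\cap\{t<\tau\}$. $E$ is a Polish space with Borel $\sigma$-field $\mathcal{B}(E)$. An $\mathbb{H}$-optional integer valued random measure (in the sense of Jacod, including $\mathbb{H}$-optionality) has the form $\pi=\sum_s\delta_{(s,\beta_s)}1_{\{s\in\cup_n[\![\theta_n]\!]\}}$ for an $E$-valued $\mathbb{H}$-optional process $\beta$ and a sequence $(\theta_n)$ of $\mathbb{H}$-stopping times. For a process $H$, $H\cdot\pi$ denotes the random measure $H_s\,\pi(ds,de)$. *)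

theory Defs
  imports "HOL-Probability.Probability"
begin

text \<open>Time set is [0,oo) inside the type real; filtrations are families of
  measurable spaces indexed by t >= 0 (values at t < 0 are irrelevant).
  Stopping times take values in [0,oo] = ennreal.\<close>

definition filtration_on :: "'w measure \<Rightarrow> (real \<Rightarrow> 'w measure) \<Rightarrow> bool" where
  "filtration_on Q H \<longleftrightarrow>
     (\<forall>t\<ge>0. space (H t) = space Q \<and> sets (H t) \<subseteq> sets Q) \<and>
     (\<forall>s t. 0 \<le> s \<longrightarrow> s \<le> t \<longrightarrow> sets (H s) \<subseteq> sets (H t))"

definition usual_conditions :: "'w measure \<Rightarrow> (real \<Rightarrow> 'w measure) \<Rightarrow> bool" where
  "usual_conditions Q H \<longleftrightarrow>
     filtration_on Q H \<and>
     (\<forall>t\<ge>0. sets (H t) = (\<Inter>s\<in>{t<..}. sets (H s))) \<and>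
     (\<forall>N A. N \<in> sets Q \<longrightarrow> emeasure Q N = 0 \<longrightarrow> A \<subseteq> N \<longrightarrow> A \<in> sets (H 0))"

definition subfiltration :: "(real \<Rightarrow> 'w measure) \<Rightarrow> (real \<Rightarrow> 'w measure) \<Rightarrow> bool" where
  "subfiltration F G \<longleftrightarrow> (\<forall>t\<ge>0. sets (F t) \<subseteq> sets (G t))"

definition stopping_time_on :: "'w measure \<Rightarrow> (real \<Rightarrow> 'w measure) \<Rightarrow> ('w \<Rightarrow> ennreal) \<Rightarrow> bool" where
  "stopping_time_on Q H T \<longleftrightarrow> (\<forall>t\<ge>0. {\<omega>\<in>space Q. T \<omega> \<le> ennreal t} \<in> sets (H t))"

definition adapted_cadlag :: "'w measure \<Rightarrow> (real \<Rightarrow> 'w measure) \<Rightarrow> ('w \<Rightarrow> real \<Rightarrow> real) \<Rightarrow> bool" where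
  "adapted_cadlag Q H X \<longleftrightarrow>
     (\<forall>t\<ge>0. (\<lambda>\<omega>. X \<omega> t) \<in> borel_measurable (H t)) \<and>
     (\<forall>\<omega>\<in>space Q. (\<forall>t\<ge>0. continuous (at_right t) (X \<omega>)) \<and>
                   (\<forall>t>0. \<exists>l. (X \<omega> \<longlongrightarrow> l) (at_left t)))"

definition optional_measure :: "'w measure \<Rightarrow> (real \<Rightarrow> 'w measure) \<Rightarrow> ('w \<times> real) measure" where
  "optional_measure Q H = sigma (space Q \<times> {0..})
     {{(\<omega>, t) \<in> space Q \<times> {0..}. X \<omega> t \<in> U} | X U. adapted_cadlag Q H X \<and> open U}"

definition optional_process :: "'w measure \<Rightarrow> (real \<Rightarrow> 'w measure) \<Rightarrow> ('w \<Rightarrow> real \<Rightarrow> 'e::topological_space) \<Rightarrow> bool" where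
  "optional_process Q H \<beta> \<longleftrightarrow> (\<lambda>(\<omega>, t). \<beta> \<omega> t) \<in> measurable (optional_measure Q H) borel"

text \<open>The integer valued random measure
  sum_s delta_(s, beta_s) 1_{s in Union_n [[theta_n]]}, evaluated at omega and A.\<close>
definition jacod_rm :: "('w \<Rightarrow> real \<Rightarrow> 'e) \<Rightarrow> (nat \<Rightarrow> 'w \<Rightarrow> ennreal) \<Rightarrow> 'w \<Rightarrow> (real \<times> 'e) set \<Rightarrow> ennreal" where
  "jacod_rm \<beta> \<theta> \<omega> A =
     emeasure (count_space UNIV) {s. 0 \<le> s \<and> (\<exists>n. \<theta> n \<omega> = ennreal s) \<and> (s, \<beta> \<omega> s) \<in> A}"

definition optional_int_random_measure ::
  "'w measure \<Rightarrow> (real \<Rightarrow> 'w measure) \<Rightarrow> ('w \<Rightarrow> (real \<times> 'e::topological_space) set \<Rightarrow> ennreal) \<Rightarrow> bool" where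
  "optional_int_random_measure Q H \<pi> \<longleftrightarrow>
     (\<exists>\<beta> \<theta>. optional_process Q H \<beta> \<and> (\<forall>n. stopping_time_on Q H (\<theta> n)) \<and>
        (\<forall>\<omega>\<in>space Q. \<forall>A\<in>sets (borel :: (real \<times> 'e) measure). \<pi> \<omega> A = jacod_rm \<beta> \<theta> \<omega> A))"

definition restrict_before :: "('w \<Rightarrow> ennreal) \<Rightarrow> ('w \<Rightarrow> (real \<times> 'e) set \<Rightarrow> ennreal) \<Rightarrow> 'w \<Rightarrow> (real \<times> 'e) set \<Rightarrow> ennreal" where
  "restrict_before \<tau> \<pi> \<omega> A = \<pi> \<omega> (A \<inter> {(s, e). 0 \<le> s \<and> ennreal s < \<tau> \<omega>})"

end

theory Submission
  imports Defs
begin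

text \<open>
  The measure \<pi> is determined by its jump times \<theta> n and by the marks \<beta> at these times.
  For a G-stopping time T, each event {T \<le> r} with r rational agrees before \<tau> with an
  F-event B r; the infimum of the rationals r with \<omega> \<in> B r is an F-stopping time T' that
  coincides with T wherever one of them lies before \<tau>. This gives the F-stopping times \<theta>' n.

  The mark at \<theta> n is recovered F-measurably on the graph of \<theta>' n by countably many tests:
  for a dense sequence d and m, k, the restriction of \<theta> n to the event that its mark lies in
  the ball around d k of radius 1/(m+1) is a G-stopping time, and, before \<tau>, the mark lies in
  that ball exactly when the reduction of this restriction coincides with \<theta>' n. Gluing these
  marks along the graphs of the \<theta>' n gives an F-optional process, and the random measure
  built from it and the \<theta>' n agrees with \<pi> on [0, \<tau>).
\<close>

section \<open>Stopping times and the optional sigma-algebra\<close>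

lemma filtration_on_space: "filtration_on Q H \<Longrightarrow> 0 \<le> t \<Longrightarrow> space (H t) = space Q"
  by (simp add: filtration_on_def)

lemma filtration_on_mono: "filtration_on Q H \<Longrightarrow> 0 \<le> s \<Longrightarrow> s \<le> t \<Longrightarrow> sets (H s) \<subseteq> sets (H t)"
  by (simp add: filtration_on_def)

lemma filtration_on_measurable_mono:
  assumes "filtration_on Q H" "0 \<le> s" "s \<le> t" "f \<in> measurable (H s) N"
  shows "f \<in> measurable (H t) N"
  by (rule measurable_from_subalg[OF _ assms(4)])
     (use assms filtration_on_mono[OF assms(1-3)] filtration_on_space[OF assms(1)]
      in \<open>auto simp: subalgebra_def\<close>)

lemma stopping_time_onD:
  "stopping_time_on Q H T \<Longrightarrow> 0 \<le> t \<Longrightarrow> {\<omega>\<in>space Q. T \<omega> \<le> ennreal t} \<in> sets (H t)"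
  by (simp add: stopping_time_on_def)

lemma space_optional_measure: "space (optional_measure Q H) = space Q \<times> {0..}"
  unfolding optional_measure_def by (rule space_measure_of) auto

lemma sets_optional_measureI:
  "adapted_cadlag Q H X \<Longrightarrow> open U \<Longrightarrow>
   {(\<omega>, t) \<in> space Q \<times> {0..}. X \<omega> t \<in> U} \<in> sets (optional_measure Q H)"
  unfolding optional_measure_def by (subst sets_measure_of) (auto intro!: sigma_sets.Basic)

lemma continuous_at_right_ennreal_step:
  "continuous (at_right t) (\<lambda>s. if a \<le> ennreal s then 1 else 0 :: real)"
proof (cases "a \<le> ennreal t")
  case True
  have "eventually (\<lambda>s. a \<le> ennreal s) (at_right t)"
    using eventually_at_right_less[of t]
    by eventually_elim (meson True dual_order.trans ennreal_leI less_imp_le)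
  then show ?thesis
    unfolding continuous_within using True by (simp add: tendsto_eventually eventually_mono)
next
  case False
  have "((\<lambda>s. ennreal s) \<longlongrightarrow> ennreal t) (at_right t)"
    by (intro tendsto_ennrealI tendsto_ident_at)
  then have "eventually (\<lambda>s. ennreal s < a) (at_right t)"
    using False by (intro order_tendstoD(2)) (simp_all add: not_le)
  then have "eventually (\<lambda>s. \<not> a \<le> ennreal s) (at_right t)"
    by eventually_elim auto
  then show ?thesis
    unfolding continuous_within using False by (simp add: tendsto_eventually eventually_mono)
qed

lemma ennreal_step_left_limit:
  assumes "0 < t"
  shows "\<exists>l. ((\<lambda>s. if a \<le> ennreal s then 1 else 0 :: real) \<longlongrightarrow> l) (at_left t)"
proof (cases "a < ennreal t")
  case True
  have "((\<lambda>s. ennreal s) \<longlongrightarrow> ennreal t) (at_left t)"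
    by (intro tendsto_ennrealI tendsto_ident_at)
  then have "eventually (\<lambda>s. a < ennreal s) (at_left t)"
    using True by (rule order_tendstoD(1))
  then have "eventually (\<lambda>s. (if a \<le> ennreal s then 1 else 0 :: real) = 1) (at_left t)"
    by eventually_elim auto
  then show ?thesis by (intro exI[of _ 1]) (simp add: tendsto_eventually)
next
  case False
  have "eventually (\<lambda>s. s < t) (at_left t)" by (simp add: eventually_at_filter)
  then have "eventually (\<lambda>s. (if a \<le> ennreal s then 1 else 0 :: real) = 0) (at_left t)"
    by eventually_elim
      (use False assms in \<open>auto simp: not_less dest: ennreal_lessI order.strict_trans2\<close>)
  then show ?thesis by (intro exI[of _ 0]) (simp add: tendsto_eventually)
qed

lemma adapted_cadlag_stopping_time_indicator:
  assumes "filtration_on Q H" "stopping_time_on Q H T"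
  shows "adapted_cadlag Q H (\<lambda>\<omega> t. if T \<omega> \<le> ennreal t then 1 else 0)"
  unfolding adapted_cadlag_def
proof (intro conjI ballI allI impI continuous_at_right_ennreal_step)
  fix t :: real assume t: "0 \<le> t"
  have "{\<omega>\<in>space (H t). T \<omega> \<le> ennreal t} \<in> sets (H t)"
    using stopping_time_onD[OF assms(2) t] filtration_on_space[OF assms(1) t] by simp
  then show "(\<lambda>\<omega>. if T \<omega> \<le> ennreal t then 1 else 0 :: real) \<in> borel_measurable (H t)"
    by (intro measurable_If) auto
next
  fix \<omega> and t :: real assume "0 < t"
  then show "\<exists>l. ((\<lambda>t. if T \<omega> \<le> ennreal t then 1 else 0 :: real) \<longlongrightarrow> l) (at_left t)"
    by (rule ennreal_step_left_limit)
qed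

lemma stopping_time_interval_optional:
  assumes "filtration_on Q H" "stopping_time_on Q H T"
  shows "{(\<omega>, t) \<in> space Q \<times> {0..}. T \<omega> \<le> ennreal t} \<in> sets (optional_measure Q H)"
proof -
  have "{(\<omega>, t) \<in> space Q \<times> {0..}. T \<omega> \<le> ennreal t} =
    {(\<omega>, t) \<in> space Q \<times> {0..}. (if T \<omega> \<le> ennreal t then 1 else 0 :: real) \<in> {1/2<..}}"
    by auto
  also have "\<dots> \<in> sets (optional_measure Q H)"
    by (intro sets_optional_measureI adapted_cadlag_stopping_time_indicator assms) auto
  finally show ?thesis .
qed

lemma stopping_time_on_add_const:
  assumes "filtration_on Q H" "stopping_time_on Q H T" "0 \<le> c"
  shows "stopping_time_on Q H (\<lambda>\<omega>. T \<omega> + ennreal c)"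
  unfolding stopping_time_on_def
proof (intro allI impI)
  fix t :: real assume "0 \<le> t"
  show "{\<omega> \<in> space Q. T \<omega> + ennreal c \<le> ennreal t} \<in> sets (H t)"
  proof (cases "c \<le> t")
    case True
    have "T \<omega> + ennreal c \<le> ennreal t \<longleftrightarrow> T \<omega> \<le> ennreal (t - c)" for \<omega>
      using True assms(3)
      by (cases "T \<omega>" rule: ennreal_cases)
        (auto simp: ennreal_plus[symmetric] top_unique simp del: ennreal_plus)
    then have "{\<omega> \<in> space Q. T \<omega> + ennreal c \<le> ennreal t} = {\<omega> \<in> space Q. T \<omega> \<le> ennreal (t - c)}"
      by simp
    also have "\<dots> \<in> sets (H (t - c))" using stopping_time_onD[OF assms(2)] True by simp
    also have "\<dots> \<subseteq> sets (H t)" using filtration_on_mono[OF assms(1)] True assms(3) by simp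
    finally show ?thesis .
  next
    case False
    have "ennreal t < ennreal c \<and> ennreal c \<le> T \<omega> + ennreal c" for \<omega>
      using False \<open>0 \<le> t\<close> by (simp add: ennreal_less_iff add_increasing)
    then have "\<not> T \<omega> + ennreal c \<le> ennreal t" for \<omega>
      by (meson order.strict_trans2 linorder_not_le)
    then show ?thesis by simp
  qed
qed

lemma stopping_time_graph_optional:
  assumes "filtration_on Q H" "stopping_time_on Q H T"
  shows "{(\<omega>, t) \<in> space Q \<times> {0..}. T \<omega> = ennreal t} \<in> sets (optional_measure Q H)"
proof -
  have eq: "T \<omega> = ennreal t \<longleftrightarrow>
      T \<omega> \<le> ennreal t \<and> (\<forall>k::nat. \<not> T \<omega> + ennreal (1 / Suc k) \<le> ennreal t)"
    if "0 \<le> t" for \<omega> t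
  proof (cases "T \<omega>" rule: ennreal_cases)
    case (real r)
    have "r = t \<longleftrightarrow> r \<le> t \<and> (\<forall>k::nat. \<not> r + 1 / Suc k \<le> t)"
    proof -
      have "\<exists>k::nat. r + 1 / Suc k \<le> t" if "r < t"
        using that by (metis diff_gt_0_iff_gt nat_approx_posE less_diff_eq add.commute less_imp_le)
      then show ?thesis by (cases "r < t") (auto simp: not_less)
    qed
    then show ?thesis
      using real that by (simp add: ennreal_plus[symmetric] del: ennreal_plus)
  qed simp
  have "{(\<omega>, t) \<in> space Q \<times> {0..}. T \<omega> = ennreal t} =
     {(\<omega>, t) \<in> space Q \<times> {0..}. T \<omega> \<le> ennreal t} -
     (\<Union>k. {(\<omega>, t) \<in> space Q \<times> {0..}. T \<omega> + ennreal (1 / Suc k) \<le> ennreal t})"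
    using eq by auto
  also have "\<dots> \<in> sets (optional_measure Q H)"
    using stopping_time_interval_optional[OF assms(1) stopping_time_on_add_const[OF assms]]
    by (intro sets.Diff sets.countable_UN stopping_time_interval_optional assms) auto
  finally show ?thesis .
qed

section \<open>Optional sets at stopping times\<close>

lemma stopping_time_min_measurable:
  assumes "filtration_on Q H" "stopping_time_on Q H T" "0 \<le> t"
  shows "(\<lambda>\<omega>. min (T \<omega>) (ennreal t)) \<in> borel_measurable (H t)"
proof (rule borel_measurableI_le)
  fix y :: ennreal
  show "{\<omega> \<in> space (H t). min (T \<omega>) (ennreal t) \<le> y} \<in> sets (H t)"
  proof (cases "ennreal t \<le> y")
    case True
    then have "{\<omega> \<in> space (H t). min (T \<omega>) (ennreal t) \<le> y} = space (H t)"
      by (auto intro: min.coboundedI2)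
    then show ?thesis by simp
  next
    case False
    then obtain r where r: "y = ennreal r" "0 \<le> r" "r \<le> t"
      by (cases y rule: ennreal_cases) (auto simp: ennreal_less_iff)
    have "{\<omega> \<in> space (H t). min (T \<omega>) (ennreal t) \<le> y} = {\<omega> \<in> space Q. T \<omega> \<le> ennreal r}"
      using False r filtration_on_space[OF assms(1,3)] by (auto simp: min_le_iff_disj)
    also have "\<dots> \<in> sets (H r)" using stopping_time_onD[OF assms(2) r(2)] .
    also have "\<dots> \<subseteq> sets (H t)" using filtration_on_mono[OF assms(1) r(2,3)] .
    finally show ?thesis .
  qed
qed

lemma dyadic_upper_approx:
  fixes r :: real
  shows "r < (of_int \<lfloor>2^m * r\<rfloor> + 1) / 2^m"
    and "(\<lambda>m::nat. (of_int \<lfloor>2^m * r\<rfloor> + 1) / 2^m) \<longlonglongrightarrow> r"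
proof -
  have upper: "r < (of_int \<lfloor>2^m * r\<rfloor> + 1) / 2^m" for m :: nat
    using real_of_int_floor_add_one_gt[of "2^m * r"] by (simp add: pos_less_divide_eq mult.commute)
  then show "r < (of_int \<lfloor>2^m * r\<rfloor> + 1) / 2^m" .
  have bound: "(of_int \<lfloor>2^m * r\<rfloor> + 1) / 2^m \<le> r + 1 / 2^m" for m :: nat
  proof -
    have "(of_int \<lfloor>2^m * r\<rfloor> + 1) / 2^m \<le> (2^m * r + 1) / (2^m :: real)"
      by (intro divide_right_mono) simp_all
    then show ?thesis by (simp add: add_divide_distrib)
  qed
  have "(\<lambda>m::nat. r + 1 / 2^m) \<longlonglongrightarrow> r + 0"
    by (intro tendsto_add tendsto_const LIMSEQ_divide_realpow_zero) auto
  then have "(\<lambda>m::nat. r + 1 / 2^m) \<longlonglongrightarrow> r" by simp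
  then show "(\<lambda>m::nat. (of_int \<lfloor>2^m * r\<rfloor> + 1) / 2^m) \<longlonglongrightarrow> r"
    by (rule tendsto_sandwich[rotated 2, OF tendsto_const]) (auto intro!: always_eventually less_imp_le upper bound)
qed

lemma adapted_at_countable_time_measurable:
  assumes "filtration_on Q H" "\<forall>s\<ge>0. (\<lambda>\<omega>. X \<omega> s) \<in> borel_measurable (H s)"
    and "countable I" "I \<subseteq> {0..t}" "\<phi> \<in> measurable (H t) (count_space I)"
  shows "(\<lambda>\<omega>. X \<omega> (\<phi> \<omega>)) \<in> borel_measurable (H t)"
proof -
  have "(\<lambda>\<omega>. X \<omega> i) \<in> borel_measurable (H t)" if "i \<in> I" for i
    by (rule filtration_on_measurable_mono[OF assms(1), of i]) (use that assms(2,4) in auto)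
  then show ?thesis
    by (rule measurable_compose_countable'[where f = "\<lambda>i \<omega>. X \<omega> i", OF _ assms(5,3)])
qed

lemma adapted_at_dyadic_time_measurable:
  fixes R :: "'w \<Rightarrow> real"
  assumes "filtration_on Q H" "\<forall>s\<ge>0. (\<lambda>\<omega>. X \<omega> s) \<in> borel_measurable (H s)" "0 \<le> t"
    and R: "R \<in> borel_measurable (H t)" and R_nonneg: "\<And>\<omega>. 0 \<le> R \<omega>"
  shows "(\<lambda>\<omega>. X \<omega> (min t ((of_int \<lfloor>2^m * R \<omega>\<rfloor> + 1) / 2^m))) \<in> borel_measurable (H t)"
proof (rule adapted_at_countable_time_measurable[OF assms(1,2)])
  let ?I = "range (\<lambda>j::int. min t ((of_int j + 1) / 2^m)) \<inter> {0..t}"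
  have "min t ((of_int \<lfloor>2^m * R \<omega>\<rfloor> + 1) / 2^m) \<in> ?I" for \<omega>
    using R_nonneg[of \<omega>] dyadic_upper_approx(1)[of "R \<omega>" m] \<open>0 \<le> t\<close> by auto
  moreover have "(\<lambda>\<omega>. min t ((of_int \<lfloor>2^m * R \<omega>\<rfloor> + 1) / 2^m)) \<in> borel_measurable (H t)"
    using R by measurable
  moreover show "countable ?I"
    by (intro countable_Int1 countable_image) simp
  ultimately show "(\<lambda>\<omega>. min t ((of_int \<lfloor>2^m * R \<omega>\<rfloor> + 1) / 2^m)) \<in> measurable (H t) (count_space ?I)"
    by (auto simp: measurable_count_space_eq_countable)
qed auto

lemma tendsto_dyadic_upper_right_continuous:
  fixes f :: "real \<Rightarrow> 'a::topological_space"
  assumes "r \<le> t" and f: "continuous (at_right r) f"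
  shows "(\<lambda>m. f (min t ((of_int \<lfloor>2^m * r\<rfloor> + 1) / 2^m))) \<longlonglongrightarrow> f r"
proof (cases "r = t")
  case True
  then show ?thesis
    using dyadic_upper_approx(1)[of t] by (simp add: min_absorb1 less_imp_le)
next
  case False
  with \<open>r \<le> t\<close> have "r < t" by simp
  have "(\<lambda>m. min t ((of_int \<lfloor>2^m * r\<rfloor> + 1) / 2^m)) \<longlonglongrightarrow> min t r"
    by (intro tendsto_min tendsto_const dyadic_upper_approx(2))
  then have "(\<lambda>m. min t ((of_int \<lfloor>2^m * r\<rfloor> + 1) / 2^m)) \<longlonglongrightarrow> r"
    using \<open>r < t\<close> by simp
  moreover have "r < min t ((of_int \<lfloor>2^m * r\<rfloor> + 1) / 2^m)" for m
    using dyadic_upper_approx(1)[of r m] \<open>r < t\<close> by simp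
  ultimately have "filterlim (\<lambda>m. min t ((of_int \<lfloor>2^m * r\<rfloor> + 1) / 2^m)) (at_right r) sequentially"
    by (intro tendsto_imp_filterlim_at_right) auto
  moreover have "(f \<longlongrightarrow> f r) (at_right r)"
    using f by (simp add: continuous_within)
  ultimately show ?thesis by (rule filterlim_compose[rotated])
qed

text \<open>Approximate the bounded stopping time from the right by dyadic times, which take only
  countably many values; right continuity gives convergence.\<close>
lemma adapted_cadlag_stopped_measurable:
  assumes filt: "filtration_on Q H" and T: "stopping_time_on Q H T" and t: "0 \<le> t"
    and X: "adapted_cadlag Q H X"
  shows "(\<lambda>\<omega>. X \<omega> (enn2real (min (T \<omega>) (ennreal t)))) \<in> borel_measurable (H t)"
proof -
  define R where "R \<omega> = enn2real (min (T \<omega>) (ennreal t))" for \<omega>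
  have R_measurable: "R \<in> borel_measurable (H t)"
    unfolding R_def by (rule borel_measurable_enn2real[OF stopping_time_min_measurable[OF filt T t]])
  have R_bounds: "0 \<le> R \<omega> \<and> R \<omega> \<le> t" for \<omega>
    unfolding R_def using t by (cases "T \<omega>" rule: ennreal_cases) (auto simp: min_def)
  have adapted: "\<forall>s\<ge>0. (\<lambda>\<omega>. X \<omega> s) \<in> borel_measurable (H s)"
    using X by (simp add: adapted_cadlag_def)
  show ?thesis
    unfolding R_def[symmetric]
  proof (rule borel_measurable_LIMSEQ_metric[where f = "\<lambda>m \<omega>. X \<omega> (min t ((of_int \<lfloor>2^m * R \<omega>\<rfloor> + 1) / 2^m))"])
    show "(\<lambda>\<omega>. X \<omega> (min t ((of_int \<lfloor>2^m * R \<omega>\<rfloor> + 1) / 2^m))) \<in> borel_measurable (H t)" for m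
      using R_bounds by (intro adapted_at_dyadic_time_measurable[OF filt adapted t R_measurable]) blast
    show "(\<lambda>m. X \<omega> (min t ((of_int \<lfloor>2^m * R \<omega>\<rfloor> + 1) / 2^m))) \<longlonglongrightarrow> X \<omega> (R \<omega>)"
      if "\<omega> \<in> space (H t)" for \<omega>
      using R_bounds[of \<omega>] X that filtration_on_space[OF filt t]
      by (intro tendsto_dyadic_upper_right_continuous) (auto simp: adapted_cadlag_def)
  qed
qed

lemma stopped_pair_measurable:
  assumes "filtration_on Q H" "stopping_time_on Q H T" "0 \<le> t"
  shows "(\<lambda>\<omega>. (\<omega>, enn2real (min (T \<omega>) (ennreal t)))) \<in> measurable (H t) (optional_measure Q H)"
  unfolding optional_measure_def
proof (rule measurable_measure_of)
  show "(\<lambda>\<omega>. (\<omega>, enn2real (min (T \<omega>) (ennreal t)))) \<in> space (H t) \<rightarrow> space Q \<times> {0..}"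
    using filtration_on_space[OF assms(1,3)] by auto
  show "{{(\<omega>, t) \<in> space Q \<times> {0..}. X \<omega> t \<in> U} | X U. adapted_cadlag Q H X \<and> open U}
      \<subseteq> Pow (space Q \<times> {0..})"
    by auto
next
  fix S assume "S \<in> {{(\<omega>, t) \<in> space Q \<times> {0..}. X \<omega> t \<in> U} | X U. adapted_cadlag Q H X \<and> open U}"
  then obtain X U where X: "adapted_cadlag Q H X" and U: "open U"
    and S: "S = {(\<omega>, t) \<in> space Q \<times> {0..}. X \<omega> t \<in> U}" by blast
  have "(\<lambda>\<omega>. (\<omega>, enn2real (min (T \<omega>) (ennreal t)))) -` S \<inter> space (H t) =
      (\<lambda>\<omega>. X \<omega> (enn2real (min (T \<omega>) (ennreal t)))) -` U \<inter> space (H t)"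
    unfolding S filtration_on_space[OF assms(1,3)] by auto
  also have "\<dots> \<in> sets (H t)"
    by (intro measurable_sets[OF adapted_cadlag_stopped_measurable[OF assms X]] borel_open U)
  finally show "(\<lambda>\<omega>. (\<omega>, enn2real (min (T \<omega>) (ennreal t)))) -` S \<inter> space (H t) \<in> sets (H t)" .
qed

lemma optional_set_at_stopping_time:
  assumes "filtration_on Q H" "stopping_time_on Q H T" "0 \<le> t"
    and "S \<in> sets (optional_measure Q H)"
  shows "{\<omega>\<in>space Q. T \<omega> \<le> ennreal t \<and> (\<omega>, enn2real (T \<omega>)) \<in> S} \<in> sets (H t)"
proof -
  have "{\<omega>\<in>space Q. T \<omega> \<le> ennreal t \<and> (\<omega>, enn2real (T \<omega>)) \<in> S} =
      {\<omega>\<in>space Q. T \<omega> \<le> ennreal t} \<inter>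
      ((\<lambda>\<omega>. (\<omega>, enn2real (min (T \<omega>) (ennreal t)))) -` S \<inter> space (H t))"
    using filtration_on_space[OF assms(1,3)] by (auto simp: min_def)
  also have "\<dots> \<in> sets (H t)"
    by (intro sets.Int stopping_time_onD[OF assms(2,3)]
        measurable_sets[OF stopped_pair_measurable[OF assms(1-3)] assms(4)])
  finally show ?thesis .
qed

lemma stopping_time_restrict_optional:
  assumes "filtration_on Q H" "stopping_time_on Q H T" "S \<in> sets (optional_measure Q H)"
  shows "stopping_time_on Q H (\<lambda>\<omega>. if (\<omega>, enn2real (T \<omega>)) \<in> S then T \<omega> else \<top>)"
  unfolding stopping_time_on_def
proof (intro allI impI)
  fix t :: real assume "0 \<le> t"
  have "{\<omega>\<in>space Q. (if (\<omega>, enn2real (T \<omega>)) \<in> S then T \<omega> else \<top>) \<le> ennreal t} =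
      {\<omega>\<in>space Q. T \<omega> \<le> ennreal t \<and> (\<omega>, enn2real (T \<omega>)) \<in> S}"
    by (auto simp: top_unique)
  also have "\<dots> \<in> sets (H t)"
    by (rule optional_set_at_stopping_time[OF assms(1,2) \<open>0 \<le> t\<close> assms(3)])
  finally show "{\<omega>\<in>space Q. (if (\<omega>, enn2real (T \<omega>)) \<in> S then T \<omega> else \<top>) \<le> ennreal t} \<in> sets (H t)" .
qed

section \<open>Reduction of stopping times before \<tau>\<close>

definition reducible_before ::
  "'w measure \<Rightarrow> (real \<Rightarrow> 'w measure) \<Rightarrow> (real \<Rightarrow> 'w measure) \<Rightarrow> ('w \<Rightarrow> ennreal) \<Rightarrow> bool" where
  "reducible_before Q G F \<tau> \<longleftrightarrow>
     (\<forall>t\<ge>0. \<forall>B\<in>sets (G t). \<exists>B'\<in>sets (F t).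
        B \<inter> {\<omega>\<in>space Q. ennreal t < \<tau> \<omega>} = B' \<inter> {\<omega>\<in>space Q. ennreal t < \<tau> \<omega>})"

definition agree_before :: "('w \<Rightarrow> ennreal) \<Rightarrow> 'w set \<Rightarrow> ('w \<Rightarrow> ennreal) \<Rightarrow> ('w \<Rightarrow> ennreal) \<Rightarrow> bool" where
  "agree_before \<tau> \<Omega> T T' \<longleftrightarrow> (\<forall>\<omega>\<in>\<Omega>. T \<omega> < \<tau> \<omega> \<or> T' \<omega> < \<tau> \<omega> \<longrightarrow> T \<omega> = T' \<omega>)"

lemma ennreal_le_iff_less_add_inverse:
  assumes "0 \<le> t"
  shows "x \<le> ennreal t \<longleftrightarrow> (\<forall>k\<ge>K. x < ennreal (t + 1 / Suc k))"
proof
  assume "x \<le> ennreal t"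
  moreover have "ennreal t < ennreal (t + 1 / Suc k)" for k :: nat
    using assms by (simp add: ennreal_less_iff)
  ultimately show "\<forall>k\<ge>K. x < ennreal (t + 1 / Suc k)"
    by (auto intro: order.strict_trans1[of x "ennreal t"])
next
  assume "\<forall>k\<ge>K. x < ennreal (t + 1 / Suc k)"
  then have "\<forall>k\<ge>K. x \<le> ennreal (t + 1 / Suc k)"
    by (auto intro: less_imp_le)
  moreover have "(\<lambda>k. t + inverse (real (Suc k))) \<longlonglongrightarrow> t + 0"
    by (intro tendsto_add tendsto_const LIMSEQ_inverse_real_of_nat)
  then have "(\<lambda>k. ennreal (t + 1 / Suc k)) \<longlonglongrightarrow> ennreal t"
    by (intro tendsto_ennrealI) (simp add: inverse_eq_divide)
  ultimately show "x \<le> ennreal t"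
    using LIMSEQ_le_const by blast
qed

lemma stopping_time_onI_less:
  assumes filt: "filtration_on Q H" and right_cont: "\<forall>t\<ge>0. sets (H t) = (\<Inter>s\<in>{t<..}. sets (H s))"
    and less: "\<And>t. 0 < t \<Longrightarrow> {\<omega>\<in>space Q. T \<omega> < ennreal t} \<in> sets (H t)"
  shows "stopping_time_on Q H T"
  unfolding stopping_time_on_def
proof (intro allI impI)
  fix t :: real assume t: "0 \<le> t"
  have "{\<omega>\<in>space Q. T \<omega> \<le> ennreal t} \<in> sets (H s)" if "t < s" for s
  proof -
    obtain K :: nat where K: "1 / Suc K < s - t"
      using \<open>t < s\<close> by (metis diff_gt_0_iff_gt nat_approx_posE)
    have "{\<omega>\<in>space Q. T \<omega> \<le> ennreal t} = (\<Inter>k\<in>{K..}. {\<omega>\<in>space Q. T \<omega> < ennreal (t + 1 / Suc k)})"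
      by (auto simp: ennreal_le_iff_less_add_inverse[OF t, of _ K])
    also have "\<dots> \<in> sets (H s)"
    proof (intro sets.countable_INT' image_subsetI)
      fix k assume "k \<in> {K..}"
      then have "1 / real (Suc k) \<le> 1 / Suc K" by (simp add: frac_le)
      then have "sets (H (t + 1 / Suc k)) \<subseteq> sets (H s)"
        using K t by (intro filtration_on_mono[OF filt]) auto
      moreover have "0 < t + 1 / Suc k"
        using t by (simp add: add_nonneg_pos)
      ultimately show "{\<omega>\<in>space Q. T \<omega> < ennreal (t + 1 / Suc k)} \<in> sets (H s)"
        using less by blast
    qed auto
    finally show ?thesis .
  qed
  moreover have "sets (H t) = (\<Inter>s\<in>{t<..}. sets (H s))"
    using right_cont t by blast
  ultimately show "{\<omega>\<in>space Q. T \<omega> \<le> ennreal t} \<in> sets (H t)"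
    by auto
qed

lemma ennreal_rat_between:
  assumes "ennreal a < z" "0 \<le> a"
  obtains r where "r \<in> \<rat>" "a < r" "ennreal r < z"
proof (cases z rule: ennreal_cases)
  case (real z')
  then have "a < z'" using assms by (simp add: ennreal_less_iff)
  then obtain r where "r \<in> \<rat>" "a < r" "r < z'" using Rats_dense_in_real by blast
  then show ?thesis using real assms by (intro that[of r]) (auto simp: ennreal_less_iff)
next
  case top
  obtain r where "r \<in> \<rat>" "a < r" "r < a + 1" using Rats_dense_in_real[of a "a + 1"] by auto
  then show ?thesis using top by (intro that[of r]) auto
qed

lemma INF_rational_tests_before:
  fixes T \<tau> :: ennreal
  assumes test: "\<And>r. r \<in> \<rat> \<Longrightarrow> 0 \<le> r \<Longrightarrow> ennreal r < \<tau> \<Longrightarrow> T \<le> ennreal r \<longleftrightarrow> P r"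
  shows "T < \<tau> \<Longrightarrow> (INF r\<in>{r\<in>\<rat>. 0 \<le> r \<and> P r}. ennreal r) = T"
    and "(INF r\<in>{r\<in>\<rat>. 0 \<le> r \<and> P r}. ennreal r) < \<tau> \<Longrightarrow> T < \<tau>"
proof -
  show "(INF r\<in>{r\<in>\<rat>. 0 \<le> r \<and> P r}. ennreal r) = T" if "T < \<tau>"
  proof (rule antisym)
    show "(INF r\<in>{r\<in>\<rat>. 0 \<le> r \<and> P r}. ennreal r) \<le> T"
    proof (rule dense_ge)
      fix y assume "T < y"
      obtain a where a: "T = ennreal a" "0 \<le> a"
        using \<open>T < \<tau>\<close> by (cases T rule: ennreal_cases) auto
      then obtain r where r: "r \<in> \<rat>" "a < r" "ennreal r < min y \<tau>"
        using \<open>T < y\<close> \<open>T < \<tau>\<close> ennreal_rat_between[of a "min y \<tau>"] by auto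
      then have "P r" using test[of r] a by (auto intro: ennreal_leI)
      then have "(INF r\<in>{r\<in>\<rat>. 0 \<le> r \<and> P r}. ennreal r) \<le> ennreal r"
        using r a by (intro INF_lower) auto
      also have "\<dots> \<le> y"
        using r(3) by (simp add: less_imp_le)
      finally show "(INF r\<in>{r\<in>\<rat>. 0 \<le> r \<and> P r}. ennreal r) \<le> y" .
    qed
    show "T \<le> (INF r\<in>{r\<in>\<rat>. 0 \<le> r \<and> P r}. ennreal r)"
    proof (rule INF_greatest)
      fix r assume "r \<in> {r\<in>\<rat>. 0 \<le> r \<and> P r}"
      then show "T \<le> ennreal r"
        using test[of r] \<open>T < \<tau>\<close> by (cases "ennreal r < \<tau>") (auto simp: not_less)
    qed
  qed
  assume "(INF r\<in>{r\<in>\<rat>. 0 \<le> r \<and> P r}. ennreal r) < \<tau>"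
  then obtain r where "r \<in> \<rat>" "0 \<le> r" "P r" "ennreal r < \<tau>"
    by (auto simp: INF_less_iff)
  then have "T \<le> ennreal r" using test by blast
  then show "T < \<tau>" using \<open>ennreal r < \<tau>\<close> by (rule order.strict_trans1)
qed

lemma stopping_time_INF_rationals:
  assumes filt: "filtration_on Q H" and right_cont: "\<forall>t\<ge>0. sets (H t) = (\<Inter>s\<in>{t<..}. sets (H s))"
    and B: "\<And>r. 0 \<le> r \<Longrightarrow> B r \<in> sets (H r)"
  shows "stopping_time_on Q H (\<lambda>\<omega>. INF r\<in>{r\<in>\<rat>. 0 \<le> r \<and> \<omega> \<in> B r}. ennreal r)"
proof (rule stopping_time_onI_less[OF filt right_cont])
  fix t :: real assume "0 < t"
  have "{\<omega>\<in>space Q. (INF r\<in>{r\<in>\<rat>. 0 \<le> r \<and> \<omega> \<in> B r}. ennreal r) < ennreal t} =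
      (\<Union>r\<in>{r\<in>\<rat>. 0 \<le> r \<and> r < t}. B r \<inter> space Q)"
    by (auto simp: INF_less_iff ennreal_less_iff)
  also have "\<dots> \<in> sets (H t)"
  proof (intro sets.countable_UN' image_subsetI)
    show "countable {r\<in>\<rat>. 0 \<le> r \<and> r < t}"
      by (rule countable_subset[OF _ countable_rat]) auto
    fix r assume "r \<in> {r\<in>\<rat>. 0 \<le> r \<and> r < t}"
    then have "B r \<in> sets (H t)"
      using B filtration_on_mono[OF filt, of r t] by force
    moreover have "space (H t) = space Q"
      using filtration_on_space[OF filt] \<open>0 < t\<close> by simp
    ultimately show "B r \<inter> space Q \<in> sets (H t)"
      by (metis sets.Int_space_eq2)
  qed
  finally show "{\<omega>\<in>space Q. (INF r\<in>{r\<in>\<rat>. 0 \<le> r \<and> \<omega> \<in> B r}. ennreal r) < ennreal t} \<in> sets (H t)" .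
qed

lemma stopping_time_reduction:
  assumes T: "stopping_time_on Q G T" and F: "usual_conditions Q F"
    and reducible: "reducible_before Q G F \<tau>"
  shows "\<exists>T'. stopping_time_on Q F T' \<and> agree_before \<tau> (space Q) T T'"
proof -
  have filt: "filtration_on Q F"
    using F unfolding usual_conditions_def by (rule conjunct1)
  have right_cont: "\<forall>t\<ge>0. sets (F t) = (\<Inter>s\<in>{t<..}. sets (F s))"
    using F unfolding usual_conditions_def by (rule conjunct1[OF conjunct2])
  have "\<forall>r\<ge>0. \<exists>B. B \<in> sets (F r) \<and>
      {\<omega>\<in>space Q. T \<omega> \<le> ennreal r} \<inter> {\<omega>\<in>space Q. ennreal r < \<tau> \<omega>} = B \<inter> {\<omega>\<in>space Q. ennreal r < \<tau> \<omega>}"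
  proof (intro allI impI)
    fix r :: real assume "0 \<le> r"
    from reducible[unfolded reducible_before_def, rule_format, OF this stopping_time_onD[OF T this]]
    show "\<exists>B. B \<in> sets (F r) \<and> {\<omega>\<in>space Q. T \<omega> \<le> ennreal r} \<inter> {\<omega>\<in>space Q. ennreal r < \<tau> \<omega>} =
        B \<inter> {\<omega>\<in>space Q. ennreal r < \<tau> \<omega>}"
      by blast
  qed
  then obtain B where B: "\<forall>r\<ge>0. B r \<in> sets (F r) \<and>
      {\<omega>\<in>space Q. T \<omega> \<le> ennreal r} \<inter> {\<omega>\<in>space Q. ennreal r < \<tau> \<omega>} = B r \<inter> {\<omega>\<in>space Q. ennreal r < \<tau> \<omega>}"
    by (subst (asm) choice_iff') blast
  define T' where "T' \<omega> = (INF r\<in>{r\<in>\<rat>. 0 \<le> r \<and> \<omega> \<in> B r}. ennreal r)" for \<omega>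
  have test: "T \<omega> \<le> ennreal r \<longleftrightarrow> \<omega> \<in> B r"
    if "\<omega> \<in> space Q" "0 \<le> r" "ennreal r < \<tau> \<omega>" for \<omega> r
    using B that by blast
  have "stopping_time_on Q F T'"
    unfolding T'_def using B by (intro stopping_time_INF_rationals[OF filt right_cont]) blast
  moreover have "agree_before \<tau> (space Q) T T'"
    unfolding agree_before_def
  proof (intro ballI impI)
    fix \<omega> assume "\<omega> \<in> space Q" and before: "T \<omega> < \<tau> \<omega> \<or> T' \<omega> < \<tau> \<omega>"
    note tests = INF_rational_tests_before[where P = "\<lambda>r. \<omega> \<in> B r", OF test[OF \<open>\<omega> \<in> space Q\<close>]]
    show "T \<omega> = T' \<omega>"
      using tests before unfolding T'_def by (metis (no_types, lifting))
  qed
  ultimately show ?thesis by blast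
qed

section \<open>Values of optional processes at reduced stopping times\<close>

lemma Cauchy_if_dist_le_inverse:
  fixes z :: "nat \<Rightarrow> 'a::metric_space"
  assumes dist: "\<And>m m'. dist (z m) (z m') \<le> 1 / Suc m + 1 / Suc m'"
  shows "Cauchy z"
proof (rule metric_CauchyI)
  fix e :: real assume "0 < e"
  then obtain N :: nat where N: "1 / Suc N < e / 2"
    by (metis half_gt_zero nat_approx_posE)
  have "dist (z m) (z m') < e" if "N \<le> m" "N \<le> m'" for m m'
  proof -
    have "dist (z m) (z m') \<le> 1 / Suc m + 1 / Suc m'"
      by (rule dist)
    also have "\<dots> \<le> 1 / Suc N + 1 / Suc N"
      using that by (intro add_mono) (simp_all add: frac_le)
    also have "\<dots> < e"
      using N by linarith
    finally show ?thesis .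
  qed
  then show "\<exists>M. \<forall>m\<ge>M. \<forall>n\<ge>M. dist (z m) (z n) < e" by blast
qed

text \<open>Approximate the point by the first element of the dense sequence passing the m-th test, and
  take the limit where these approximations are Cauchy at rate 1/m, which is a measurable condition.\<close>
lemma borel_measurable_from_ball_tests:
  fixes d :: "nat \<Rightarrow> 'e::polish_space"
  assumes dense: "\<And>y e. 0 < e \<Longrightarrow> \<exists>k. dist y (d k) < e"
    and tests[measurable]: "\<And>m k. Measurable.pred M (P m k)"
  obtains Y where "Y \<in> borel_measurable M"
    and "\<And>\<omega> y. \<omega> \<in> space M \<Longrightarrow> (\<And>m k. P m k \<omega> \<longleftrightarrow> dist y (d k) < 1 / Suc m) \<Longrightarrow> Y \<omega> = y"
proof
  define z where "z m \<omega> = d (LEAST k. P m k \<omega>)" for m \<omega>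
  define good where "good \<omega> \<longleftrightarrow> (\<forall>m. \<exists>k. P m k \<omega>) \<and>
      (\<forall>m m'. dist (z m \<omega>) (z m' \<omega>) \<le> 1 / Suc m + 1 / Suc m')" for \<omega>
  define Y where "Y \<omega> = (if good \<omega> then lim (\<lambda>m. z m \<omega>) else d 0)" for \<omega>
  have [measurable]: "z m \<in> borel_measurable M" for m
    unfolding z_def by measurable
  have [measurable]: "Measurable.pred M good"
    unfolding good_def by measurable
  have "Cauchy (\<lambda>m. z m \<omega>)" if "good \<omega>" for \<omega>
    using that unfolding good_def by (intro Cauchy_if_dist_le_inverse) blast
  then have "(\<lambda>m. if good \<omega> then z m \<omega> else d 0) \<longlonglongrightarrow> Y \<omega>" for \<omega>
    by (cases "good \<omega>") (simp_all add: Y_def Cauchy_convergent_iff convergent_LIMSEQ_iff)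
  then show "Y \<in> borel_measurable M"
    by (rule borel_measurable_LIMSEQ_metric[rotated]) measurable
  fix \<omega> y assume y: "\<And>m k. P m k \<omega> \<longleftrightarrow> dist y (d k) < 1 / Suc m"
  have "\<exists>k. P m k \<omega>" for m
    using dense[of "1 / Suc m" y] y by auto
  then have close: "dist (z m \<omega>) y < 1 / Suc m" for m
    unfolding z_def using y by (metis LeastI_ex dist_commute)
  have "dist (z m \<omega>) (z m' \<omega>) \<le> 1 / Suc m + 1 / Suc m'" for m m'
    using dist_triangle[of "z m \<omega>" "z m' \<omega>" y] close[of m] close[of m'] by (simp add: dist_commute)
  with \<open>\<And>m. \<exists>k. P m k \<omega>\<close> have "good \<omega>"
    unfolding good_def by blast
  moreover have "(\<lambda>m. z m \<omega>) \<longlonglongrightarrow> y"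
  proof (rule tendsto_dist_iff[THEN iffD2], rule tendsto_sandwich[OF _ _ tendsto_const])
    show "(\<lambda>m. 1 / real (Suc m)) \<longlonglongrightarrow> 0"
      using LIMSEQ_inverse_real_of_nat by (simp add: inverse_eq_divide)
  qed (use close in \<open>auto intro: always_eventually less_imp_le\<close>)
  ultimately show "Y \<omega> = y"
    unfolding Y_def by (simp add: limI)
qed

definition graph_optional_sets :: "'w measure \<Rightarrow> (real \<Rightarrow> 'w measure) \<Rightarrow> ('w \<Rightarrow> ennreal) \<Rightarrow> 'w set set" where
  "graph_optional_sets Q H T = {S. S \<subseteq> space Q \<and>
     {(\<omega>, t) \<in> space Q \<times> {0..}. T \<omega> = ennreal t \<and> \<omega> \<in> S} \<in> sets (optional_measure Q H)}"

lemma sigma_algebra_graph_optional_sets: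
  assumes "filtration_on Q H" "stopping_time_on Q H T"
  shows "sigma_algebra (space Q) (graph_optional_sets Q H T)"
  unfolding sigma_algebra_iff2
proof (intro conjI allI impI ballI)
  show "graph_optional_sets Q H T \<subseteq> Pow (space Q)" "{} \<in> graph_optional_sets Q H T"
    by (auto simp: graph_optional_sets_def)
next
  fix S assume "S \<in> graph_optional_sets Q H T"
  moreover have "{(\<omega>, t) \<in> space Q \<times> {0..}. T \<omega> = ennreal t \<and> \<omega> \<in> space Q - S} =
     {(\<omega>, t) \<in> space Q \<times> {0..}. T \<omega> = ennreal t} - {(\<omega>, t) \<in> space Q \<times> {0..}. T \<omega> = ennreal t \<and> \<omega> \<in> S}"
    by auto
  ultimately show "space Q - S \<in> graph_optional_sets Q H T"
    using stopping_time_graph_optional[OF assms] by (auto simp: graph_optional_sets_def)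
next
  fix S :: "nat \<Rightarrow> _" assume "range S \<subseteq> graph_optional_sets Q H T"
  moreover have "{(\<omega>, t) \<in> space Q \<times> {0..}. T \<omega> = ennreal t \<and> \<omega> \<in> (\<Union>i. S i)} =
     (\<Union>i. {(\<omega>, t) \<in> space Q \<times> {0..}. T \<omega> = ennreal t \<and> \<omega> \<in> S i})"
    by auto
  ultimately show "(\<Union>i. S i) \<in> graph_optional_sets Q H T"
    by (auto simp: graph_optional_sets_def intro!: sets.countable_UN)
qed

lemma sets_sigma_graph_optional_sets:
  assumes "filtration_on Q H" "stopping_time_on Q H T"
  shows "sets (sigma (space Q) (graph_optional_sets Q H T)) = graph_optional_sets Q H T"
proof -
  have "graph_optional_sets Q H T \<subseteq> Pow (space Q)"
    by (auto simp: graph_optional_sets_def)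
  then show ?thesis
    using sigma_algebra.sigma_sets_eq[OF sigma_algebra_graph_optional_sets[OF assms]]
    by (simp add: sets_measure_of)
qed

lemma graph_optional_if_measurable:
  assumes "filtration_on Q H" "stopping_time_on Q H T"
    and Y: "Y \<in> borel_measurable (sigma (space Q) (graph_optional_sets Q H T))" and "open U"
  shows "{(\<omega>, t) \<in> space Q \<times> {0..}. T \<omega> = ennreal t \<and> Y \<omega> \<in> U} \<in> sets (optional_measure Q H)"
proof -
  have "Y -` U \<inter> space Q \<in> graph_optional_sets Q H T"
    using measurable_sets[OF Y borel_open[OF \<open>open U\<close>]]
    by (simp add: sets_sigma_graph_optional_sets[OF assms(1,2)] space_measure_of_conv)
  moreover have "{(\<omega>, t) \<in> space Q \<times> {0..}. T \<omega> = ennreal t \<and> Y \<omega> \<in> U} =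
      {(\<omega>, t) \<in> space Q \<times> {0..}. T \<omega> = ennreal t \<and> \<omega> \<in> Y -` U \<inter> space Q}"
    by auto
  ultimately show ?thesis
    by (simp add: graph_optional_sets_def)
qed

lemma pred_graph_optional_sets_coincide:
  assumes filt: "filtration_on Q H" and T: "stopping_time_on Q H T" and T'': "stopping_time_on Q H T''"
  shows "Measurable.pred (sigma (space Q) (graph_optional_sets Q H T)) (\<lambda>\<omega>. T \<omega> < \<top> \<and> T'' \<omega> = T \<omega>)"
proof -
  have "{(\<omega>, t) \<in> space Q \<times> {0..}. T \<omega> = ennreal t \<and> \<omega> \<in> {\<omega>\<in>space Q. T \<omega> < \<top> \<and> T'' \<omega> = T \<omega>}} =
     {(\<omega>, t) \<in> space Q \<times> {0..}. T \<omega> = ennreal t} \<inter> {(\<omega>, t) \<in> space Q \<times> {0..}. T'' \<omega> = ennreal t}"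
    by auto
  also have "\<dots> \<in> sets (optional_measure Q H)"
    by (intro sets.Int stopping_time_graph_optional[OF filt] T T'')
  finally have "{\<omega>\<in>space Q. T \<omega> < \<top> \<and> T'' \<omega> = T \<omega>} \<in> graph_optional_sets Q H T"
    unfolding graph_optional_sets_def by blast
  then show ?thesis
    unfolding pred_def by (simp add: sets_sigma_graph_optional_sets[OF filt T] space_measure_of_conv)
qed

lemma agree_before_restrict_iff:
  assumes agree: "agree_before \<tau> \<Omega> T T'"
    and agree_P: "agree_before \<tau> \<Omega> (\<lambda>\<omega>. if P \<omega> then T \<omega> else \<top>) T''"
    and \<omega>: "\<omega> \<in> \<Omega>" and before: "T \<omega> < \<tau> \<omega>"
  shows "T' \<omega> < \<top> \<and> T'' \<omega> = T' \<omega> \<longleftrightarrow> P \<omega>"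
proof -
  have T': "T \<omega> = T' \<omega>"
    using agree \<omega> before unfolding agree_before_def by blast
  have finite: "T \<omega> < \<top>"
    using before top.extremum by (rule order.strict_trans2)
  have T'': "(if P \<omega> then T \<omega> else \<top>) = T'' \<omega>"
    if "(if P \<omega> then T \<omega> else \<top>) < \<tau> \<omega> \<or> T'' \<omega> < \<tau> \<omega>"
    using agree_P \<omega> that unfolding agree_before_def by blast
  show ?thesis
  proof
    assume "T' \<omega> < \<top> \<and> T'' \<omega> = T' \<omega>"
    then have "T'' \<omega> = T \<omega>"
      using T' by simp
    with before have "(if P \<omega> then T \<omega> else \<top>) = T \<omega>"
      using T''[OF disjI2] by simp
    then show "P \<omega>"
      using finite by (auto split: if_splits)
  next
    assume "P \<omega>"
    then have "(if P \<omega> then T \<omega> else \<top>) = T \<omega>"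
      by simp
    with before have "T'' \<omega> = T \<omega>"
      using T''[OF disjI1] by simp
    then show "T' \<omega> < \<top> \<and> T'' \<omega> = T' \<omega>"
      using T' finite by simp
  qed
qed

lemma polish_space_dense_sequence:
  obtains d :: "nat \<Rightarrow> 'e::polish_space" where "\<And>y e. 0 < e \<Longrightarrow> \<exists>k. dist y (d k) < e"
proof -
  obtain D :: "'e set" where D: "countable D" "\<And>X. open X \<Longrightarrow> X \<noteq> {} \<Longrightarrow> \<exists>d\<in>D. d \<in> X"
    using countable_dense_exists by blast
  have "\<exists>k. dist y (from_nat_into D k) < e" if "0 < e" for y :: 'e and e :: real
  proof -
    obtain x where "x \<in> D" "x \<in> ball y e" using D(2)[of "ball y e"] \<open>0 < e\<close> by auto
    then show ?thesis by (metis from_nat_into_surj[OF D(1)] mem_ball)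
  qed
  then show ?thesis by (rule that)
qed

lemma optional_process_at_reduced_time:
  fixes \<beta> :: "'w \<Rightarrow> real \<Rightarrow> 'e::polish_space"
  assumes G: "filtration_on Q G" and F: "usual_conditions Q F" and reducible: "reducible_before Q G F \<tau>"
    and \<beta>: "optional_process Q G \<beta>" and T: "stopping_time_on Q G T"
    and T': "stopping_time_on Q F T'" and agree: "agree_before \<tau> (space Q) T T'"
  obtains Y where
    "\<And>U. open U \<Longrightarrow> {(\<omega>, t) \<in> space Q \<times> {0..}. T' \<omega> = ennreal t \<and> Y \<omega> \<in> U} \<in> sets (optional_measure Q F)"
    and "\<And>\<omega>. \<omega> \<in> space Q \<Longrightarrow> T \<omega> < \<tau> \<omega> \<Longrightarrow> Y \<omega> = \<beta> \<omega> (enn2real (T \<omega>))"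
proof -
  have filt: "filtration_on Q F"
    using F unfolding usual_conditions_def by (rule conjunct1)
  obtain d :: "nat \<Rightarrow> 'e" where dense: "\<And>y e. 0 < e \<Longrightarrow> \<exists>k. dist y (d k) < e"
    using polish_space_dense_sequence by blast
  define S where "S m k = {(\<omega>, s) \<in> space Q \<times> {0..}. \<beta> \<omega> s \<in> ball (d k) (1 / Suc m)}" for m k :: nat
  have "S m k = (\<lambda>(\<omega>, t). \<beta> \<omega> t) -` ball (d k) (1 / Suc m) \<inter> space (optional_measure Q G)" for m k
    unfolding S_def space_optional_measure by auto
  then have S: "S m k \<in> sets (optional_measure Q G)" for m k
    using measurable_sets[OF \<beta>[unfolded optional_process_def]] by simp
  define TE where "TE m k \<omega> = (if (\<omega>, enn2real (T \<omega>)) \<in> S m k then T \<omega> else \<top>)" for m k \<omega>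
  have "\<forall>m k. \<exists>T'. stopping_time_on Q F T' \<and> agree_before \<tau> (space Q) (TE m k) T'"
    unfolding TE_def
    using stopping_time_reduction[OF stopping_time_restrict_optional[OF G T S] F reducible] by blast
  then obtain TE' where TE': "\<And>m k. stopping_time_on Q F (TE' m k)"
    and agree_TE: "\<And>m k. agree_before \<tau> (space Q) (TE m k) (TE' m k)"
    by (simp only: choice_iff) blast
  define M where "M = sigma (space Q) (graph_optional_sets Q F T')"
  have tests: "Measurable.pred M (\<lambda>\<omega>. T' \<omega> < \<top> \<and> TE' m k \<omega> = T' \<omega>)" for m k
    unfolding M_def by (rule pred_graph_optional_sets_coincide[OF filt T' TE'])
  have tests_iff: "T' \<omega> < \<top> \<and> TE' m k \<omega> = T' \<omega> \<longleftrightarrow> dist (\<beta> \<omega> (enn2real (T \<omega>))) (d k) < 1 / Suc m"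
    if "\<omega> \<in> space Q" "T \<omega> < \<tau> \<omega>" for \<omega> m k
    using agree_before_restrict_iff[OF agree agree_TE[unfolded TE_def] that] that(1)
    by (simp add: S_def dist_commute)
  show ?thesis
  proof (rule borel_measurable_from_ball_tests[where P = "\<lambda>m k \<omega>. T' \<omega> < \<top> \<and> TE' m k \<omega> = T' \<omega>",
        OF dense tests])
    fix Y assume Y_measurable: "Y \<in> borel_measurable M"
      and Y: "\<And>\<omega> y. \<omega> \<in> space M \<Longrightarrow>
        (\<And>m k. T' \<omega> < \<top> \<and> TE' m k \<omega> = T' \<omega> \<longleftrightarrow> dist y (d k) < 1 / Suc m) \<Longrightarrow> Y \<omega> = y"
    show ?thesis
    proof (rule that)
      show "{(\<omega>, t) \<in> space Q \<times> {0..}. T' \<omega> = ennreal t \<and> Y \<omega> \<in> U} \<in> sets (optional_measure Q F)"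
        if "open U" for U
        using graph_optional_if_measurable[OF filt T' _ that] Y_measurable unfolding M_def by blast
      show "Y \<omega> = \<beta> \<omega> (enn2real (T \<omega>))" if "\<omega> \<in> space Q" "T \<omega> < \<tau> \<omega>" for \<omega>
        using Y[of \<omega>] tests_iff[OF that] that(1) unfolding M_def space_measure_of_conv by blast
    qed
  qed
qed

section \<open>The reduced random measure\<close>

definition glue_on_graphs :: "(nat \<Rightarrow> 'w \<Rightarrow> ennreal) \<Rightarrow> (nat \<Rightarrow> 'w \<Rightarrow> 'e) \<Rightarrow> 'e \<Rightarrow> 'w \<Rightarrow> real \<Rightarrow> 'e" where
  "glue_on_graphs \<theta> Y c \<omega> t = (if \<exists>n. \<theta> n \<omega> = ennreal t then Y (LEAST n. \<theta> n \<omega> = ennreal t) \<omega> else c)"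

lemma glue_on_graphs_eq:
  assumes "\<theta> n \<omega> = ennreal t"
  obtains m where "\<theta> m \<omega> = ennreal t" "glue_on_graphs \<theta> Y c \<omega> t = Y m \<omega>"
proof (rule that)
  show "\<theta> (LEAST n. \<theta> n \<omega> = ennreal t) \<omega> = ennreal t"
    using assms by (rule LeastI)
  then show "glue_on_graphs \<theta> Y c \<omega> t = Y (LEAST n. \<theta> n \<omega> = ennreal t) \<omega>"
    unfolding glue_on_graphs_def by auto
qed

lemma glue_on_graphs_in_iff:
  "glue_on_graphs \<theta> Y c \<omega> t \<in> U \<longleftrightarrow>
     (\<exists>n. \<theta> n \<omega> = ennreal t \<and> Y n \<omega> \<in> U \<and> (\<forall>i<n. \<theta> i \<omega> \<noteq> ennreal t)) \<or>
     ((\<forall>n. \<theta> n \<omega> \<noteq> ennreal t) \<and> c \<in> U)"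
proof (cases "\<exists>n. \<theta> n \<omega> = ennreal t")
  case True
  define N where "N = (LEAST n. \<theta> n \<omega> = ennreal t)"
  have N: "\<theta> N \<omega> = ennreal t"
    unfolding N_def using True by (rule LeastI_ex)
  have below_N: "\<theta> i \<omega> \<noteq> ennreal t" if "i < N" for i
    using that unfolding N_def by (rule not_less_Least)
  have unique: "n = N" if "\<theta> n \<omega> = ennreal t" "\<forall>i<n. \<theta> i \<omega> \<noteq> ennreal t" for n
    using that N below_N by (meson linorder_neqE_nat)
  have glue: "glue_on_graphs \<theta> Y c \<omega> t = Y N \<omega>"
    using True unfolding glue_on_graphs_def N_def by (rule if_P)
  show ?thesis
  proof
    assume "glue_on_graphs \<theta> Y c \<omega> t \<in> U"
    then show "(\<exists>n. \<theta> n \<omega> = ennreal t \<and> Y n \<omega> \<in> U \<and> (\<forall>i<n. \<theta> i \<omega> \<noteq> ennreal t)) \<or>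
        ((\<forall>n. \<theta> n \<omega> \<noteq> ennreal t) \<and> c \<in> U)"
      using glue N below_N by (intro disjI1 exI[of _ N]) simp
  next
    assume "(\<exists>n. \<theta> n \<omega> = ennreal t \<and> Y n \<omega> \<in> U \<and> (\<forall>i<n. \<theta> i \<omega> \<noteq> ennreal t)) \<or>
        ((\<forall>n. \<theta> n \<omega> \<noteq> ennreal t) \<and> c \<in> U)"
    then show "glue_on_graphs \<theta> Y c \<omega> t \<in> U"
    proof
      assume "\<exists>n. \<theta> n \<omega> = ennreal t \<and> Y n \<omega> \<in> U \<and> (\<forall>i<n. \<theta> i \<omega> \<noteq> ennreal t)"
      then obtain n where "\<theta> n \<omega> = ennreal t" "Y n \<omega> \<in> U" "\<forall>i<n. \<theta> i \<omega> \<noteq> ennreal t"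
        by blast
      then show ?thesis
        using glue unique by simp
    next
      assume "(\<forall>n. \<theta> n \<omega> \<noteq> ennreal t) \<and> c \<in> U"
      then show ?thesis
        using True by blast
    qed
  qed
qed (simp add: glue_on_graphs_def)

lemma optional_process_glue_on_graphs:
  fixes Y :: "nat \<Rightarrow> 'w \<Rightarrow> 'e::topological_space"
  assumes filt: "filtration_on Q H" and \<theta>: "\<And>n. stopping_time_on Q H (\<theta> n)"
    and Y: "\<And>n U. open U \<Longrightarrow>
      {(\<omega>, t) \<in> space Q \<times> {0..}. \<theta> n \<omega> = ennreal t \<and> Y n \<omega> \<in> U} \<in> sets (optional_measure Q H)"
  shows "optional_process Q H (glue_on_graphs \<theta> Y c)"
  unfolding optional_process_def
proof (rule borel_measurableI)
  fix U :: "'e set" assume "open U"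
  define graph where "graph n = {(\<omega>, t) \<in> space Q \<times> {0..}. \<theta> n \<omega> = ennreal t}" for n
  have graph: "graph n \<in> sets (optional_measure Q H)" for n
    unfolding graph_def by (rule stopping_time_graph_optional[OF filt \<theta>])
  define first_hit where "first_hit n = {(\<omega>, t) \<in> space Q \<times> {0..}.
    \<theta> n \<omega> = ennreal t \<and> Y n \<omega> \<in> U \<and> (\<forall>i<n. \<theta> i \<omega> \<noteq> ennreal t)}" for n
  define no_hit where "no_hit = {(\<omega>, t) \<in> space Q \<times> {0..}. (\<forall>n. \<theta> n \<omega> \<noteq> ennreal t) \<and> c \<in> U}"
  have "first_hit n = {(\<omega>, t) \<in> space Q \<times> {0..}. \<theta> n \<omega> = ennreal t \<and> Y n \<omega> \<in> U} - (\<Union>i<n. graph i)"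
    for n unfolding first_hit_def graph_def by auto
  then have first_hit: "first_hit n \<in> sets (optional_measure Q H)" for n
    using Y[OF \<open>open U\<close>] graph by (auto intro!: sets.Diff sets.finite_UN)
  have "no_hit = (if c \<in> U then space Q \<times> {0..} - (\<Union>n. graph n) else {})"
    unfolding no_hit_def graph_def by auto
  then have no_hit: "no_hit \<in> sets (optional_measure Q H)"
    using graph sets.top[of "optional_measure Q H"] by (auto simp: space_optional_measure)
  have "(\<lambda>(\<omega>, t). glue_on_graphs \<theta> Y c \<omega> t) -` U \<inter> space (optional_measure Q H) =
      {(\<omega>, t) \<in> space Q \<times> {0..}. glue_on_graphs \<theta> Y c \<omega> t \<in> U}"
    by (auto simp: space_optional_measure)
  also have "\<dots> = (\<Union>n. first_hit n) \<union> no_hit"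
    unfolding glue_on_graphs_in_iff first_hit_def no_hit_def by auto
  also have "\<dots> \<in> sets (optional_measure Q H)"
    by (intro sets.Un sets.countable_UN image_subsetI first_hit no_hit)
  finally show "(\<lambda>(\<omega>, t). glue_on_graphs \<theta> Y c \<omega> t) -` U \<inter> space (optional_measure Q H)
      \<in> sets (optional_measure Q H)" .
qed

lemma jacod_rm_before_cong:
  assumes agree: "\<And>n. \<theta> n \<omega> < c \<or> \<theta>' n \<omega> < c \<Longrightarrow> \<theta> n \<omega> = \<theta>' n \<omega>"
    and values_before: "\<And>n s. \<theta> n \<omega> = ennreal s \<Longrightarrow> 0 \<le> s \<Longrightarrow> ennreal s < c \<Longrightarrow> \<beta>' \<omega> s = \<beta> \<omega> s"
  shows "jacod_rm \<beta> \<theta> \<omega> (A \<inter> {(s, e). 0 \<le> s \<and> ennreal s < c}) =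
    jacod_rm \<beta>' \<theta>' \<omega> (A \<inter> {(s, e). 0 \<le> s \<and> ennreal s < c})"
  unfolding jacod_rm_def
proof (intro arg_cong[where f = "emeasure (count_space UNIV)"] Collect_cong)
  fix s
  have "(\<exists>n. \<theta> n \<omega> = ennreal s) \<longleftrightarrow> (\<exists>n. \<theta>' n \<omega> = ennreal s)" if "ennreal s < c"
    using agree that by metis
  then show "(0 \<le> s \<and> (\<exists>n. \<theta> n \<omega> = ennreal s) \<and> (s, \<beta> \<omega> s) \<in> A \<inter> {(s, e). 0 \<le> s \<and> ennreal s < c}) =
      (0 \<le> s \<and> (\<exists>n. \<theta>' n \<omega> = ennreal s) \<and> (s, \<beta>' \<omega> s) \<in> A \<inter> {(s, e). 0 \<le> s \<and> ennreal s < c})"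
    using values_before by auto
qed

lemma sets_borel_before:
  "{(s, e). 0 \<le> s \<and> ennreal s < c} \<in> sets (borel :: (real \<times> 'e::second_countable_topology) measure)"
proof -
  have "fst \<in> borel_measurable (borel :: (real \<times> 'e) measure)"
    by (intro borel_measurable_continuous_onI continuous_on_fst continuous_on_id)
  moreover have "Measurable.pred borel (\<lambda>s :: real. 0 \<le> s \<and> ennreal s < c)"
    by measurable
  ultimately have "Measurable.pred borel (\<lambda>x :: real \<times> 'e. 0 \<le> fst x \<and> ennreal (fst x) < c)"
    by (rule measurable_compose)
  then show ?thesis
    by (simp add: pred_def case_prod_beta')
qed

lemma jacod_rm_glue_before:
  assumes agree: "\<And>n. agree_before \<tau> \<Omega> (\<theta> n) (\<theta>' n)" and "\<omega> \<in> \<Omega>"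
    and Y: "\<And>n. \<theta> n \<omega> < \<tau> \<omega> \<Longrightarrow> Y n \<omega> = \<beta> \<omega> (enn2real (\<theta> n \<omega>))"
  shows "jacod_rm \<beta> \<theta> \<omega> (A \<inter> {(s, e). 0 \<le> s \<and> ennreal s < \<tau> \<omega>}) =
    jacod_rm (glue_on_graphs \<theta>' Y c) \<theta>' \<omega> (A \<inter> {(s, e). 0 \<le> s \<and> ennreal s < \<tau> \<omega>})"
proof (rule jacod_rm_before_cong)
  show agree_at: "\<theta> n \<omega> = \<theta>' n \<omega>" if "\<theta> n \<omega> < \<tau> \<omega> \<or> \<theta>' n \<omega> < \<tau> \<omega>" for n
    using agree[of n] \<open>\<omega> \<in> \<Omega>\<close> that unfolding agree_before_def by blast
  fix n s assume s: "\<theta> n \<omega> = ennreal s" "0 \<le> s" "ennreal s < \<tau> \<omega>"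
  then have "\<theta>' n \<omega> = ennreal s"
    using agree_at[of n] by auto
  then obtain m where m: "\<theta>' m \<omega> = ennreal s" "glue_on_graphs \<theta>' Y c \<omega> s = Y m \<omega>"
    by (rule glue_on_graphs_eq)
  then have "\<theta> m \<omega> = ennreal s"
    using agree_at[of m] s(3) by auto
  then show "glue_on_graphs \<theta>' Y c \<omega> s = \<beta> \<omega> s"
    using m Y s(2,3) by simp
qed

lemma jacod_rm_reduction:
  fixes \<beta> :: "'w \<Rightarrow> real \<Rightarrow> 'e::polish_space"
  assumes G: "filtration_on Q G" and F: "usual_conditions Q F" and reducible: "reducible_before Q G F \<tau>"
    and \<beta>: "optional_process Q G \<beta>" and \<theta>: "\<And>n. stopping_time_on Q G (\<theta> n)"
  shows "\<exists>\<beta>' \<theta>'. optional_process Q F \<beta>' \<and> (\<forall>n. stopping_time_on Q F (\<theta>' n)) \<and>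
    (\<forall>\<omega>\<in>space Q. \<forall>A. jacod_rm \<beta> \<theta> \<omega> (A \<inter> {(s, e). 0 \<le> s \<and> ennreal s < \<tau> \<omega>}) =
      jacod_rm \<beta>' \<theta>' \<omega> (A \<inter> {(s, e). 0 \<le> s \<and> ennreal s < \<tau> \<omega>}))"
proof -
  have filt: "filtration_on Q F"
    using F unfolding usual_conditions_def by (rule conjunct1)
  have "\<forall>n. \<exists>T'. stopping_time_on Q F T' \<and> agree_before \<tau> (space Q) (\<theta> n) T'"
    using stopping_time_reduction[OF \<theta> F reducible] by blast
  then obtain \<theta>' where "\<forall>n. stopping_time_on Q F (\<theta>' n) \<and> agree_before \<tau> (space Q) (\<theta> n) (\<theta>' n)"
    unfolding choice_iff ..
  note \<theta>' = conjunct1[OF this[rule_format]] and agree = conjunct2[OF this[rule_format]]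
  have "\<forall>n. \<exists>Y. (\<forall>U. open U \<longrightarrow>
      {(\<omega>, t) \<in> space Q \<times> {0..}. \<theta>' n \<omega> = ennreal t \<and> Y \<omega> \<in> U} \<in> sets (optional_measure Q F)) \<and>
      (\<forall>\<omega>\<in>space Q. \<theta> n \<omega> < \<tau> \<omega> \<longrightarrow> Y \<omega> = \<beta> \<omega> (enn2real (\<theta> n \<omega>)))"
  proof
    fix n
    show "\<exists>Y. (\<forall>U. open U \<longrightarrow>
      {(\<omega>, t) \<in> space Q \<times> {0..}. \<theta>' n \<omega> = ennreal t \<and> Y \<omega> \<in> U} \<in> sets (optional_measure Q F)) \<and>
      (\<forall>\<omega>\<in>space Q. \<theta> n \<omega> < \<tau> \<omega> \<longrightarrow> Y \<omega> = \<beta> \<omega> (enn2real (\<theta> n \<omega>)))"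
      by (rule optional_process_at_reduced_time[OF G F reducible \<beta> \<theta> \<theta>' agree]) blast
  qed
  then obtain Y where Y: "\<forall>n. (\<forall>U. open U \<longrightarrow>
      {(\<omega>, t) \<in> space Q \<times> {0..}. \<theta>' n \<omega> = ennreal t \<and> Y n \<omega> \<in> U} \<in> sets (optional_measure Q F)) \<and>
      (\<forall>\<omega>\<in>space Q. \<theta> n \<omega> < \<tau> \<omega> \<longrightarrow> Y n \<omega> = \<beta> \<omega> (enn2real (\<theta> n \<omega>)))"
    unfolding choice_iff ..
  note Y_graph = conjunct1[OF Y[rule_format], rule_format]
    and Y_value = conjunct2[OF Y[rule_format], rule_format]
  show ?thesis
  proof (intro exI[of _ "glue_on_graphs \<theta>' Y undefined"] exI[of _ \<theta>'] conjI allI ballI)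
    show "optional_process Q F (glue_on_graphs \<theta>' Y undefined)"
      by (rule optional_process_glue_on_graphs[OF filt \<theta>' Y_graph])
    show "stopping_time_on Q F (\<theta>' n)" for n
      by (rule \<theta>')
    show "jacod_rm \<beta> \<theta> \<omega> (A \<inter> {(s, e). 0 \<le> s \<and> ennreal s < \<tau> \<omega>}) =
        jacod_rm (glue_on_graphs \<theta>' Y undefined) \<theta>' \<omega> (A \<inter> {(s, e). 0 \<le> s \<and> ennreal s < \<tau> \<omega>})"
      if "\<omega> \<in> space Q" for \<omega> A
      by (rule jacod_rm_glue_before[where \<beta> = \<beta> and \<tau> = \<tau> and \<theta> = \<theta> and \<theta>' = \<theta>' and Y = Y,
            OF agree that Y_value[OF that]])
  qed
qed

theorem lemma6p1:
  fixes Q :: "'w measure"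
    and G F :: "real \<Rightarrow> 'w measure"
    and \<tau> :: "'w \<Rightarrow> ennreal"
    and \<pi> :: "'w \<Rightarrow> (real \<times> 'e::polish_space) set \<Rightarrow> ennreal"
  assumes "prob_space Q"
    and "usual_conditions Q G"
    and "usual_conditions Q F"
    and "subfiltration F G"
    and "stopping_time_on Q G \<tau>"
    and "\<forall>\<omega>\<in>space Q. 0 < \<tau> \<omega>"
    and "\<forall>t\<ge>0. \<forall>B\<in>sets (G t). \<exists>B'\<in>sets (F t).
           B \<inter> {\<omega>\<in>space Q. ennreal t < \<tau> \<omega>} = B' \<inter> {\<omega>\<in>space Q. ennreal t < \<tau> \<omega>}"
    and "optional_int_random_measure Q G \<pi>"
  shows "\<exists>\<pi>' :: 'w \<Rightarrow> (real \<times> 'e) set \<Rightarrow> ennreal.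
           optional_int_random_measure Q F \<pi>' \<and>
           (\<forall>\<omega>\<in>space Q. \<forall>A\<in>sets (borel :: (real \<times> 'e) measure).
              restrict_before \<tau> \<pi> \<omega> A = restrict_before \<tau> \<pi>' \<omega> A)"
proof -
  have G: "filtration_on Q G"
    using assms(2) unfolding usual_conditions_def by (rule conjunct1)
  have reducible: "reducible_before Q G F \<tau>"
    using assms(7) unfolding reducible_before_def .
  obtain \<beta> :: "'w \<Rightarrow> real \<Rightarrow> 'e" and \<theta> where \<beta>: "optional_process Q G \<beta>"
    and \<theta>: "\<And>n. stopping_time_on Q G (\<theta> n)"
    and \<pi>: "\<And>\<omega> A. \<omega> \<in> space Q \<Longrightarrow> A \<in> sets borel \<Longrightarrow> \<pi> \<omega> A = jacod_rm \<beta> \<theta> \<omega> A"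
    using assms(8) unfolding optional_int_random_measure_def by blast
  obtain \<beta>' \<theta>' where \<beta>': "optional_process Q F \<beta>'" and \<theta>': "\<forall>n. stopping_time_on Q F (\<theta>' n)"
    and reduced: "\<forall>\<omega>\<in>space Q. \<forall>A. jacod_rm \<beta> \<theta> \<omega> (A \<inter> {(s, e). 0 \<le> s \<and> ennreal s < \<tau> \<omega>}) =
      jacod_rm \<beta>' \<theta>' \<omega> (A \<inter> {(s, e). 0 \<le> s \<and> ennreal s < \<tau> \<omega>})"
    using jacod_rm_reduction[where \<theta> = \<theta>, OF G assms(3) reducible \<beta> \<theta>] by blast
  have "optional_int_random_measure Q F (jacod_rm \<beta>' \<theta>')"
    unfolding optional_int_random_measure_def
    by (intro exI[of _ \<beta>'] exI[of _ \<theta>'] conjI ballI refl \<beta>' \<theta>')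
  moreover have "restrict_before \<tau> \<pi> \<omega> A = restrict_before \<tau> (jacod_rm \<beta>' \<theta>') \<omega> A"
    if \<omega>: "\<omega> \<in> space Q" and A: "A \<in> sets borel" for \<omega> A
    unfolding restrict_before_def \<pi>[OF \<omega> sets.Int[OF A sets_borel_before]]
    by (rule reduced[rule_format, OF \<omega>])
  ultimately show ?thesis by blast
qed

end
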